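(* Let $\mathcal{C}$ be a $(v,w,\lambda_a,\lambda_c)$-OOC with $|\mathcal{C}|\ge 2$. Then $\lambda_c\ge w^2/v$.
   Context: Let $v\ge 2$, $w\ge 1$, $\lambda_a,\lambda_c\ge 0$ be integers. A family $\mathcal{C}=\{X_0,\dots,X_{N-1}\}$ ($N\ge1$) of binary sequences of length $v$ and weight $w$ (number of ones) is a $(v,w,\lambda_a,\lambda_c)$-optical orthogonal code (OOC) if, writing $X=(x_t)_{t=0}^{v-1}$, $Y=(y_t)_{t=0}^{v-1}$ with indices mod $v$: (i) $\sum_{t=0}^{v-1}x_tx_{t+\delta}\le\lambda_a$ for every $X\in\mathcal{C}$ and $0<\delta\le v-1$; and (ii) $\sum_{t=0}^{v-1}x_ty_{t+\delta}\le\lambda_c$ for all distinct $X,Y\in\mathcal{C}$ and all $0\le\delta\le v-1$. *)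

theory Defs
  imports Complex_Main "HOL-Library.FuncSet"
begin

text \<open>A binary sequence of length v is represented as a function nat => bool,
  of which only the values at 0..v-1 are relevant; indices are taken mod v.\<close>

definition weight :: "nat \<Rightarrow> (nat \<Rightarrow> bool) \<Rightarrow> nat" where
  "weight v X = card {t. t < v \<and> X t}"

definition corr :: "nat \<Rightarrow> (nat \<Rightarrow> bool) \<Rightarrow> (nat \<Rightarrow> bool) \<Rightarrow> nat \<Rightarrow> nat" where
  "corr v X Y \<delta> = card {t. t < v \<and> X t \<and> Y ((t + \<delta>) mod v)}"

definition is_OOC :: "nat \<Rightarrow> nat \<Rightarrow> nat \<Rightarrow> nat \<Rightarrow> nat \<Rightarrow> (nat \<Rightarrow> nat \<Rightarrow> bool) \<Rightarrow> bool" where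
  "is_OOC v w la lc N X \<longleftrightarrow>
     2 \<le> v \<and> 1 \<le> w \<and> 1 \<le> N \<and>
     (\<forall>i<N. weight v (X i) = w) \<and>
     (\<forall>i<N. \<forall>\<delta>. 0 < \<delta> \<and> \<delta> \<le> v - 1 \<longrightarrow> corr v (X i) (X i) \<delta> \<le> la) \<and>
     (\<forall>i<N. \<forall>j<N. i \<noteq> j \<longrightarrow> (\<forall>\<delta>. \<delta> \<le> v - 1 \<longrightarrow> corr v (X i) (X j) \<delta> \<le> lc))"

end

theory Submission
  imports Defs "HOL-Number_Theory.Cong"
begin

text \<open>Summing the periodic cross-correlation of two sequences over all v shifts counts every
  pair of a one of the first and a one of the second exactly once, so the v correlation values of
  two codewords of weight w add up to w^2. For two distinct codewords each value is at most lc,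
  hence w^2 <= v lc.\<close>

lemma bij_betw_add_mod_lessThan: "bij_betw (\<lambda>d. (t + d) mod v) {..<v} {..<v::nat}"
proof -
  have inj: "inj_on (\<lambda>d. (t + d) mod v) {..<v}"
  proof (rule inj_onI)
    fix x y assume "x \<in> {..<v}" "y \<in> {..<v}" "(t + x) mod v = (t + y) mod v"
    then show "x = y"
      by (metis cong_add_lcancel_nat cong_def cong_less_modulus_unique_nat lessThan_iff)
  qed
  have "(\<lambda>d. (t + d) mod v) ` {..<v} = {..<v}"
    by (rule endo_inj_surj[OF finite_lessThan _ inj]) auto
  with inj show ?thesis
    by (simp add: bij_betw_def)
qed

lemma sum_add_mod_lessThan: "(\<Sum>d<v. f ((t + d) mod v)) = (\<Sum>s<v::nat. f s)"
  using sum.reindex_bij_betw[OF bij_betw_add_mod_lessThan] .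

lemma weight_eq_sum: "weight v X = (\<Sum>t<v. of_bool (X t))"
  by (simp add: weight_def lessThan_def Collect_conj_eq)

lemma corr_eq_sum: "corr v X Y \<delta> = (\<Sum>t<v. of_bool (X t) * of_bool (Y ((t + \<delta>) mod v)))"
  by (simp add: corr_def lessThan_def Collect_conj_eq flip: of_bool_conj)

lemma sum_corr_eq_weight_mult: "(\<Sum>\<delta><v. corr v X Y \<delta>) = weight v X * weight v Y"
proof -
  have "(\<Sum>\<delta><v. corr v X Y \<delta>)
      = (\<Sum>t<v. of_bool (X t) * (\<Sum>\<delta><v. of_bool (Y ((t + \<delta>) mod v))))"
    unfolding corr_eq_sum sum_distrib_left by (rule sum.swap)
  also have "\<dots> = (\<Sum>t<v. of_bool (X t) * weight v Y)"
    by (simp only: sum_add_mod_lessThan[of "\<lambda>s. of_bool (Y s)"] weight_eq_sum)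
  also have "\<dots> = weight v X * weight v Y"
    by (simp add: weight_eq_sum sum_distrib_right)
  finally show ?thesis .
qed

theorem proposition5p2:
  fixes v w la lc N :: nat and X :: "nat \<Rightarrow> nat \<Rightarrow> bool"
  assumes "is_OOC v w la lc N X"
    and "card ((\<lambda>i. restrict (X i) {..<v}) ` {..<N}) \<ge> 2"
  shows "real lc \<ge> real w ^ 2 / real v"
proof -
  have "2 \<le> N"
    using assms(2) card_image_le[of "{..<N}" "\<lambda>i. restrict (X i) {..<v}"] by simp
  then have weights: "weight v (X 0) = w" "weight v (X 1) = w"
    and cross: "\<And>\<delta>. \<delta> < v \<Longrightarrow> corr v (X 0) (X 1) \<delta> \<le> lc"
    and "0 < v"
    using assms(1) unfolding is_OOC_def by auto
  have "w * w = (\<Sum>\<delta><v. corr v (X 0) (X 1) \<delta>)"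
    by (simp only: sum_corr_eq_weight_mult weights)
  also have "\<dots> \<le> v * lc"
    using sum_mono[of "{..<v}", OF cross] by simp
  finally have "real w ^ 2 \<le> real lc * real v"
    by (simp add: power2_eq_square mult.commute flip: of_nat_mult)
  with \<open>0 < v\<close> show ?thesis
    by (simp add: divide_le_eq)
qed

end
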